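(* Consider the uplink system described in the context and suppose $L_u=1$ for all $u\in\{1,\dots,U\}$. Let $C^*$ be the optimal value of $$\max\ \log\Big|\sum_{u=1}^U \mathbf G_u(\mathbf w_u)\mathbf Q_u\mathbf G_u^H(\mathbf w_u)+\mathbf I_M\Big|$$ over $\mathbf Q_u\succeq\mathbf 0$, $\mathrm{tr}(\mathbf Q_u)\le P_u$, $0\le w_{u,n}\le W_u$, $w_{u,n}\ne w_{u,n'}$ ($n\ne n'$), $u=1,\dots,U$, and let $C^{\mathrm{ub}*}$ be the optimal value of $$\max\ \log\Big|\sum_{u=1}^U MN_u\mathbf A_{u,\mathrm R}\boldsymbol\Gamma_u\tilde{\mathbf Q}_u\boldsymbol\Gamma_u^H\mathbf A_{u,\mathrm R}^H+\mathbf I_M\Big|$$ over $\tilde{\mathbf Q}_u\in\mathbb C^{L_u\times L_u}$, $\tilde{\mathbf Q}_u\succeq\mathbf 0$, $\mathrm{tr}(\tilde{\mathbf Q}_u)\le L_uP_u$. Then $$C^*=C^{\mathrm{ub}*}=\log\Big|\sum_{u=1}^U MN_uP_u|\gamma_{u,1}|^2\mathbf a_{u,\mathrm R}(\beta_{u,1})\mathbf a_{u,\mathrm R}^H(\beta_{u,1})+\mathbf I_M\Big|.$$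
   Context: A base station (BS) has an $M$-antenna uniform linear array with spacing $d=\lambda/2$ ($\lambda$ the wavelength). User $u\in\{1,\dots,U\}$ has $N_u$ antennas at positions $w_{u,1},\dots,w_{u,N_u}\in[0,W_u]$ on a line, power budget $P_u>0$, and $L_u$ propagation paths to the BS with complex gains $\gamma_{u,l}$, angles of arrival $\beta_{u,l}\in[0,\pi]$ and angles of departure $\theta_{u,l}\in[0,\pi]$. Define $\mathbf a_{u,\mathrm R}(\beta)=\frac1{\sqrt M}[1,e^{-j\frac{2\pi}{\lambda}d\cos\beta},\dots,e^{-j\frac{2\pi}{\lambda}(M-1)d\cos\beta}]^T$, $\mathbf a_{u,\mathrm T}(\theta,\mathbf w_u)=\frac1{\sqrt{N_u}}[e^{-j\frac{2\pi}{\lambda}w_{u,1}\cos\theta},\dots,e^{-j\frac{2\pi}{\lambda}w_{u,N_u}\cos\theta}]^T$, $\boldsymbol\Gamma_u=\mathrm{diag}(\gamma_{u,1},\dots,\gamma_{u,L_u})$, $\mathbf A_{u,\mathrm R}=[\mathbf a_{u,\mathrm R}(\beta_{u,l})]_{l=1}^{L_u}$, $\mathbf A_{u,\mathrm T}(\mathbf w_u)=[\mathbf a_{u,\mathrm T}(\theta_{u,l},\mathbf w_u)]_{l=1}^{L_u}$, and the channel $\mathbf G_u(\mathbf w_u)=\sqrt{MN_u}\,\mathbf A_{u,\mathrm R}\boldsymbol\Gamma_u\mathbf A_{u,\mathrm T}^H(\mathbf w_u)$. $|\cdot|$ denotes determinant. *)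

theory Defs
  imports "Jordan_Normal_Form.Schur_Decomposition" "Jordan_Normal_Form.Determinant"
begin

text \<open>Receive steering vector a_R(beta) of the M-antenna ULA at the BS (spacing d, wavelength lam).
  Entries indexed 0..M-1.\<close>
definition aR :: "real \<Rightarrow> real \<Rightarrow> nat \<Rightarrow> real \<Rightarrow> complex Matrix.vec" where
  "aR lam d M beta = vec M (\<lambda>m. complex_of_real (1 / sqrt (real M)) *
       cis (- (2 * pi / lam) * real m * d * cos beta))"

text \<open>Transmit steering vector a_T(theta, w) for antenna positions w 1, ..., w N
  (entry j, 0-based, corresponds to antenna j+1).\<close>
definition aT :: "real \<Rightarrow> nat \<Rightarrow> (nat \<Rightarrow> real) \<Rightarrow> real \<Rightarrow> complex Matrix.vec" where
  "aT lam N w theta = vec N (\<lambda>j. complex_of_real (1 / sqrt (real N)) *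
       cis (- (2 * pi / lam) * w (j + 1) * cos theta))"

text \<open>A_R = [a_R(beta_1), ..., a_R(beta_L)] (M x L); column j is path j+1.\<close>
definition AR :: "real \<Rightarrow> real \<Rightarrow> nat \<Rightarrow> nat \<Rightarrow> (nat \<Rightarrow> real) \<Rightarrow> complex mat" where
  "AR lam d M L beta = mat M L (\<lambda>(i, j). aR lam d M (beta (j + 1)) $ i)"

definition AT :: "real \<Rightarrow> nat \<Rightarrow> nat \<Rightarrow> (nat \<Rightarrow> real) \<Rightarrow> (nat \<Rightarrow> real) \<Rightarrow> complex mat" where
  "AT lam N L theta w = mat N L (\<lambda>(i, j). aT lam N w (theta (j + 1)) $ i)"

definition Gam :: "nat \<Rightarrow> (nat \<Rightarrow> complex) \<Rightarrow> complex mat" where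
  "Gam L gamma = mat L L (\<lambda>(i, j). if i = j then gamma (i + 1) else 0)"

definition chanG :: "real \<Rightarrow> real \<Rightarrow> nat \<Rightarrow> nat \<Rightarrow> nat \<Rightarrow> (nat \<Rightarrow> complex)
     \<Rightarrow> (nat \<Rightarrow> real) \<Rightarrow> (nat \<Rightarrow> real) \<Rightarrow> (nat \<Rightarrow> real) \<Rightarrow> complex mat" where
  "chanG lam d M N L gamma beta theta w =
     complex_of_real (sqrt (real (M * N))) \<cdot>\<^sub>m
       (AR lam d M L beta * Gam L gamma * mat_adjoint (AT lam N L theta w))"

definition psd :: "nat \<Rightarrow> complex mat \<Rightarrow> bool" where
  "psd n Q \<longleftrightarrow> Q \<in> carrier_mat n n \<and> mat_adjoint Q = Q \<and>
     (\<forall>v \<in> carrier_vec n. 0 \<le> Re (conjugate v \<bullet> (Q *\<^sub>v v)))"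

definition msum :: "nat \<Rightarrow> nat set \<Rightarrow> (nat \<Rightarrow> complex mat) \<Rightarrow> complex mat" where
  "msum M S F = mat M M (\<lambda>(i, j). \<Sum>u\<in>S. F u $$ (i, j))"

definition mtrace :: "complex mat \<Rightarrow> complex" where
  "mtrace A = (\<Sum>i<dim_row A. A $$ (i, i))"

text \<open>log-determinant objective log |X| (natural logarithm; X Hermitian PD so det X is real > 0).\<close>
definition logdet :: "complex mat \<Rightarrow> real" where
  "logdet X = ln (Re (det X))"

end

theory Submission
  imports Defs
begin

(* With a single path, every channel G_u(w_u) = sqrt(M N_u) gamma_u a_R a_T(w_u)^H has rank one, so
   G_u Q_u G_u^H = M N_u |gamma_u|^2 (a_T^H Q_u a_T) a_R a_R^H, and every term of the upper bound is
   likewise a nonnegative multiple of a_R a_R^H.  Since a_T has unit norm, a_T^H Q_u a_T <= tr Q_u <= P_u.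
   Hence each feasible point of either problem has the value log|I + sum_u c_u a_u a_u^H| with
   0 <= c_u <= M N_u P_u |gamma_u|^2.  This value is monotone in every c_u, because det (B + D) >= det B
   for B positive definite and D positive semidefinite, and the largest multiples are attained:
   by Q_u = P_u a_T a_T^H at any admissible antenna positions, and by Q~_u = P_u. *)

abbreviation qform :: "complex mat \<Rightarrow> complex vec \<Rightarrow> complex" where
  "qform A v \<equiv> conjugate v \<bullet> (A *\<^sub>v v)"

text \<open>Here \<open>0 \<le> z\<close> is the order of HOL-Library.Complex_Order: \<open>z\<close> is real and nonnegative.
  For complex matrices this forces \<open>A\<close> to be Hermitian, so the notion is equivalent to \<open>psd\<close>.\<close>
definition pos_semidef :: "nat \<Rightarrow> complex mat \<Rightarrow> bool" where
  "pos_semidef n A \<longleftrightarrow> A \<in> carrier_mat n n \<and> (\<forall>v \<in> carrier_vec n. 0 \<le> qform A v)"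

lemma dim_row_mat_adjoint [simp]: "dim_row (mat_adjoint A) = dim_col A"
  and dim_col_mat_adjoint [simp]: "dim_col (mat_adjoint A) = dim_row A"
  unfolding mat_adjoint_def by simp_all

lemma index_mat_adjoint [simp]:
  "i < dim_col A \<Longrightarrow> j < dim_row A \<Longrightarrow> mat_adjoint A $$ (i, j) = cnj (A $$ (j, i))"
  unfolding mat_adjoint_def by (simp add: mat_of_rows_def)

lemma qform_eq_sum:
  assumes "A \<in> carrier_mat n n" "v \<in> carrier_vec n"
  shows "qform A v = (\<Sum>i<n. \<Sum>j<n. cnj (v $ i) * A $$ (i, j) * v $ j)"
  using assms
  by (auto simp: scalar_prod_def sum_distrib_left atLeast0LessThan mult_ac intro!: sum.cong)

lemma sprod_conjugate_self_pos:
  fixes v :: "complex vec"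
  assumes "v \<in> carrier_vec n" "v \<noteq> 0\<^sub>v n"
  shows "0 < conjugate v \<bullet> v"
  using assms conjugate_square_greater_0_vec[OF assms(1)] comm_scalar_prod[of v n "conjugate v"]
  by simp

lemma complex_nonneg_if_mult_pos:
  fixes b k :: complex
  assumes "0 < b" "0 \<le> k * b"
  shows "0 \<le> k"
  using assms by (auto simp: less_eq_complex_def less_complex_def zero_le_mult_iff)

lemma qform_cnj_if_hermitian:
  assumes A: "A \<in> carrier_mat n n" and herm: "mat_adjoint A = A" and v: "v \<in> carrier_vec n"
  shows "cnj (qform A v) = qform A v"
proof -
  have entry: "cnj (A $$ (i, j)) = A $$ (j, i)" if "i < n" "j < n" for i j
    using arg_cong[OF herm, of "\<lambda>B. B $$ (j, i)"] A that by simp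
  have "cnj (qform A v) = (\<Sum>i<n. \<Sum>j<n. cnj (v $ j) * A $$ (j, i) * v $ i)"
    unfolding qform_eq_sum[OF A v] by (simp add: entry mult_ac)
  also have "\<dots> = qform A v"
    unfolding qform_eq_sum[OF A v] by (rule sum.swap)
  finally show ?thesis .
qed

lemma pos_semidef_if_psd:
  assumes "psd n A"
  shows "pos_semidef n A"
  using assms qform_cnj_if_hermitian[of A n]
  unfolding psd_def pos_semidef_def by (auto simp: less_eq_complex_def complex_eq_iff)

lemma qform_le_mtrace:
  assumes Q: "pos_semidef n Q" and t: "t \<in> carrier_vec n" and unit: "conjugate t \<bullet> t = 1"
  shows "qform Q t \<le> mtrace Q"
proof -
  have Qc: "Q \<in> carrier_mat n n" using Q unfolding pos_semidef_def by simp
  \<comment> \<open>\<open>r k\<close> is column \<open>k\<close> of the projection \<open>I - t t\<^sup>H\<close>; summing the quadratic form over these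
    columns gives \<open>tr ((I - t t\<^sup>H) Q (I - t t\<^sup>H)) = tr Q - t\<^sup>H Q t\<close>.\<close>
  define r where "r k = vec n (\<lambda>i. (if i = k then 1 else 0) - t $ i * cnj (t $ k))" for k
  have r: "r k \<in> carrier_vec n" for k unfolding r_def by simp
  have unit': "(\<Sum>k<n. t $ k * cnj (t $ k)) = 1"
    using unit t by (simp add: scalar_prod_def atLeast0LessThan mult.commute)
  have proj: "(\<Sum>k<n. cnj (r k $ i) * r k $ j) = (if i = j then 1 else 0) - cnj (t $ i) * t $ j"
    if "i < n" "j < n" for i j
  proof -
    have "(\<Sum>k<n. cnj (r k $ i) * r k $ j) = (\<Sum>k<n. (if i = k then if j = k then 1 else 0 else 0)
        - (if i = k then t $ j * cnj (t $ k) else 0) - (if j = k then cnj (t $ i) * t $ k else 0)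
        + cnj (t $ i) * t $ j * (t $ k * cnj (t $ k)))"
      using that by (intro sum.cong) (auto simp: r_def algebra_simps)
    also have "\<dots> = (if i = j then 1 else 0) - cnj (t $ i) * t $ j"
      using that by (simp add: sum.distrib sum_subtractf sum_distrib_left[symmetric] unit')
    finally show ?thesis .
  qed
  have "(\<Sum>k<n. qform Q (r k)) = (\<Sum>k<n. \<Sum>i<n. \<Sum>j<n. cnj (r k $ i) * Q $$ (i, j) * r k $ j)"
    unfolding qform_eq_sum[OF Qc r] ..
  also have "\<dots> = (\<Sum>i<n. \<Sum>j<n. \<Sum>k<n. cnj (r k $ i) * Q $$ (i, j) * r k $ j)"
    by (subst sum.swap) (intro sum.cong refl sum.swap)
  also have "\<dots> = (\<Sum>i<n. \<Sum>j<n. Q $$ (i, j) * (\<Sum>k<n. cnj (r k $ i) * r k $ j))"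
    by (simp add: sum_distrib_left mult_ac)
  also have "\<dots> = (\<Sum>i<n. \<Sum>j<n. Q $$ (i, j) * ((if i = j then 1 else 0) - cnj (t $ i) * t $ j))"
    by (intro sum.cong refl) (simp add: proj)
  also have "\<dots> = (\<Sum>i<n. Q $$ (i, i)) - qform Q t"
    unfolding qform_eq_sum[OF Qc t]
    by (simp add: right_diff_distrib sum_subtractf mult_ac if_distrib[of "times _"])
  also have "\<dots> = mtrace Q - qform Q t"
    using Qc unfolding mtrace_def by simp
  finally have "mtrace Q - qform Q t = (\<Sum>k<n. qform Q (r k))" ..
  also have "\<dots> \<ge> 0"
    using Q r unfolding pos_semidef_def by (simp add: sum_nonneg)
  finally show ?thesis by simp
qed

lemma generalized_eigenvalue_nonneg:
  assumes B: "B \<in> carrier_mat n n"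
    and B_pd: "\<And>v. v \<in> carrier_vec n \<Longrightarrow> v \<noteq> 0\<^sub>v n \<Longrightarrow> 0 < qform B v"
    and D: "pos_semidef n D" and v: "v \<in> carrier_vec n" "v \<noteq> 0\<^sub>v n"
    and eq: "D *\<^sub>v v = k \<cdot>\<^sub>v (B *\<^sub>v v)"
  shows "0 \<le> k"
proof (rule complex_nonneg_if_mult_pos)
  show "0 < qform B v" using B_pd v .
  have "qform D v = k * qform B v" using B v by (simp add: eq)
  then show "0 \<le> k * qform B v" using D v unfolding pos_semidef_def by metis
qed

lemma one_le_prod_list_one_minus:
  fixes as :: "complex list"
  assumes "\<forall>a \<in> set as. a \<le> 0"
  shows "1 \<le> (\<Prod>a\<leftarrow>as. 1 - a)"
  using assms
proof (induction as)
  case (Cons a as)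
  then have "1 * 1 \<le> (1 - a) * (\<Prod>a\<leftarrow>as. 1 - a)"
    by (intro mult_mono) (auto simp: less_eq_complex_def)
  then show ?case by simp
qed simp

lemma one_le_det_one_plus:
  fixes A :: "complex mat"
  assumes A: "A \<in> carrier_mat n n" and ev: "\<And>k. eigenvalue A k \<Longrightarrow> 0 \<le> k"
  shows "1 \<le> det (1\<^sub>m n + A)"
proof -
  have mA: "- A \<in> carrier_mat n n" using A by simp
  \<comment> \<open>\<open>det (I + A)\<close> is the characteristic polynomial of \<open>-A\<close> at 1.\<close>
  obtain as where cp: "char_poly (- A) = (\<Prod>a\<leftarrow>as. [:- a, 1:])"
    using char_poly_factorized[OF mA] by blast
  have "- char_matrix (- A) 1 = 1\<^sub>m n + A"
    unfolding char_matrix_def using A by (intro eq_matI) auto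
  then have "det (1\<^sub>m n + A) = poly (char_poly (- A)) 1"
    using char_poly_matrix[OF mA, of 1] by simp
  also have "\<dots> = (\<Prod>a\<leftarrow>as. 1 - a)"
    unfolding cp poly_prod_list by (simp add: o_def)
  finally have det_eq: "det (1\<^sub>m n + A) = (\<Prod>a\<leftarrow>as. 1 - a)" .
  have "a \<le> 0" if a: "a \<in> set as" for a
  proof -
    have "poly (char_poly (- A)) a = 0"
      unfolding cp poly_prod_list using a by (induction as) (auto simp: o_def)
    then obtain v where "eigenvector (- A) v a"
      using eigenvalue_root_char_poly[OF mA] unfolding eigenvalue_def by blast
    then have "eigenvector A v (- a)"
      using A unfolding eigenvector_def by (auto intro!: eq_vecI dest: arg_cong[of _ _ uminus])
    then show ?thesis using ev unfolding eigenvalue_def by fastforce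
  qed
  then show ?thesis unfolding det_eq by (intro one_le_prod_list_one_minus) blast
qed

text \<open>\<open>B + D = B (I + B\<^sup>-\<^sup>1 D)\<close>, and an eigenvalue \<open>k\<close> of \<open>B\<^sup>-\<^sup>1 D\<close> satisfies \<open>D v = k B v\<close>,
  so it is nonnegative.\<close>
lemma det_le_det_add:
  fixes B D :: "complex mat"
  assumes B: "B \<in> carrier_mat n n"
    and B_pd: "\<And>v. v \<in> carrier_vec n \<Longrightarrow> v \<noteq> 0\<^sub>v n \<Longrightarrow> 0 < qform B v"
    and det_B: "0 < det B" and D: "pos_semidef n D"
  shows "det B \<le> det (B + D)"
proof -
  have Dc: "D \<in> carrier_mat n n" using D unfolding pos_semidef_def by simp
  have "det B \<noteq> 0" using det_B by auto
  then obtain B' where B': "B' \<in> carrier_mat n n" "B' * B = 1\<^sub>m n"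
    using det_non_zero_imp_unit[OF B, of "()"] unfolding Units_def ring_mat_def by auto
  have BB': "B * B' = 1\<^sub>m n" using mat_mult_left_right_inverse[OF B'(1) B B'(2)] .
  define A where "A = B' * D"
  have A: "A \<in> carrier_mat n n" unfolding A_def using B' Dc by simp
  have BA: "B * A = D"
    unfolding A_def using B B' Dc by (simp add: assoc_mult_mat[symmetric, of B n n B' n D] BB')
  have sum_eq: "B + D = B * (1\<^sub>m n + A)"
    using mult_add_distrib_mat[OF B one_carrier_mat A] B by (simp add: BA)
  have "0 \<le> k" if "eigenvalue A k" for k
  proof -
    obtain v where v: "v \<in> carrier_vec n" "v \<noteq> 0\<^sub>v n" "A *\<^sub>v v = k \<cdot>\<^sub>v v"
      using \<open>eigenvalue A k\<close> A unfolding eigenvalue_def eigenvector_def by auto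
    have "D *\<^sub>v v = B *\<^sub>v (A *\<^sub>v v)" using B A v by (simp flip: BA)
    also have "\<dots> = k \<cdot>\<^sub>v (B *\<^sub>v v)" using B v by (simp add: v(3) mult_mat_vec)
    finally show ?thesis using generalized_eigenvalue_nonneg[OF B B_pd D v(1,2)] by blast
  qed
  then have "1 \<le> det (1\<^sub>m n + A)" by (rule one_le_det_one_plus[OF A])
  then have "det B * 1 \<le> det B * det (1\<^sub>m n + A)"
    using det_B by (intro mult_left_mono) auto
  also have "\<dots> = det (B + D)" unfolding sum_eq using B A by (simp add: det_mult)
  finally show ?thesis by simp
qed

lemma qform_one_plus:
  assumes "S \<in> carrier_mat n n" "v \<in> carrier_vec n"
  shows "qform (1\<^sub>m n + S) v = conjugate v \<bullet> v + qform S v"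
  using assms by (simp add: add_mult_distrib_mat_vec[of _ n n] scalar_prod_add_distrib[of _ n])

lemma one_le_det_one_plus_pos_semidef:
  assumes "pos_semidef n S"
  shows "1 \<le> det (1\<^sub>m n + S)"
  using det_le_det_add[of "1\<^sub>m n" n S] assms sprod_conjugate_self_pos
  by (simp add: less_complex_def)

lemma det_one_plus_mono:
  assumes S: "pos_semidef n S" and D: "pos_semidef n D"
  shows "det (1\<^sub>m n + S) \<le> det (1\<^sub>m n + S + D)"
proof (rule det_le_det_add[OF _ _ _ D])
  have Sc: "S \<in> carrier_mat n n" using S unfolding pos_semidef_def by simp
  then show "1\<^sub>m n + S \<in> carrier_mat n n" by simp
  show "0 < qform (1\<^sub>m n + S) v" if "v \<in> carrier_vec n" "v \<noteq> 0\<^sub>v n" for v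
    using S that sprod_conjugate_self_pos[OF that] unfolding qform_one_plus[OF Sc that(1)]
    unfolding pos_semidef_def by (simp add: add_pos_nonneg)
  show "0 < det (1\<^sub>m n + S)"
    using one_le_det_one_plus_pos_semidef[OF S] by (auto simp: less_eq_complex_def less_complex_def)
qed

definition outer_prod :: "complex vec \<Rightarrow> complex vec \<Rightarrow> complex mat" where
  "outer_prod a b = mat (dim_vec a) (dim_vec b) (\<lambda>(i, j). a $ i * cnj (b $ j))"

definition rank_one_sum :: "nat \<Rightarrow> nat set \<Rightarrow> (nat \<Rightarrow> real) \<Rightarrow> (nat \<Rightarrow> complex vec) \<Rightarrow> complex mat"
  where "rank_one_sum m S c a = msum m S (\<lambda>u. complex_of_real (c u) \<cdot>\<^sub>m outer_prod (a u) (a u))"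

lemma index_smult_outer_prod [simp]:
  "i < dim_vec a \<Longrightarrow> j < dim_vec b \<Longrightarrow> (c \<cdot>\<^sub>m outer_prod a b) $$ (i, j) = c * (a $ i * cnj (b $ j))"
  by (simp add: outer_prod_def)

lemma msum_cong: "(\<And>u. u \<in> S \<Longrightarrow> F u = F' u) \<Longrightarrow> msum m S F = msum m S F'"
  unfolding msum_def by (auto intro!: cong_mat sum.cong)

lemma qform_msum:
  assumes "\<And>u. u \<in> S \<Longrightarrow> F u \<in> carrier_mat m m" and v: "v \<in> carrier_vec m"
  shows "qform (msum m S F) v = (\<Sum>u\<in>S. qform (F u) v)"
proof -
  have "qform (msum m S F) v = (\<Sum>i<m. \<Sum>j<m. \<Sum>u\<in>S. cnj (v $ i) * F u $$ (i, j) * v $ j)"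
    by (subst qform_eq_sum[OF _ v]) (auto simp: msum_def sum_distrib_left sum_distrib_right)
  also have "\<dots> = (\<Sum>u\<in>S. \<Sum>i<m. \<Sum>j<m. cnj (v $ i) * F u $$ (i, j) * v $ j)"
    by (subst sum.swap) (intro sum.cong refl sum.swap)
  also have "\<dots> = (\<Sum>u\<in>S. qform (F u) v)"
    using assms by (intro sum.cong refl) (simp add: qform_eq_sum[OF _ v])
  finally show ?thesis .
qed

lemma pos_semidef_msum:
  assumes "\<And>u. u \<in> S \<Longrightarrow> pos_semidef m (F u)"
  shows "pos_semidef m (msum m S F)"
  using assms qform_msum[of S F m] unfolding pos_semidef_def
  by (auto simp: msum_def intro!: sum_nonneg)

lemma smult_outer_prod_mult_vec:
  assumes "b \<in> carrier_vec n" "v \<in> carrier_vec n"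
  shows "(c \<cdot>\<^sub>m outer_prod a b) *\<^sub>v v = (c * (conjugate b \<bullet> v)) \<cdot>\<^sub>v a"
  using assms
  by (intro eq_vecI) (auto simp: outer_prod_def scalar_prod_def sum_distrib_left mult_ac)

lemma qform_outer_prod:
  assumes a: "a \<in> carrier_vec m" and v: "v \<in> carrier_vec m"
  shows "qform (c \<cdot>\<^sub>m outer_prod a a) v = c * ((conjugate v \<bullet> a) * cnj (conjugate v \<bullet> a))"
proof -
  have "cnj (conjugate v \<bullet> a) = conjugate a \<bullet> v"
    using conjugate_sprod_vec[of "conjugate v" m a] comm_scalar_prod[of v m "conjugate a"] a v
    by simp
  then show ?thesis
    using a v by (simp add: smult_outer_prod_mult_vec[OF a v] mult_ac)
qed

lemma pos_semidef_outer_prod: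
  assumes "a \<in> carrier_vec m" "0 \<le> c"
  shows "pos_semidef m (c \<cdot>\<^sub>m outer_prod a a)"
  using assms conjugate_square_positive[where 'a = complex] qform_outer_prod[OF assms(1)]
  unfolding pos_semidef_def by (auto simp: outer_prod_def intro!: mult_nonneg_nonneg)

lemma pos_semidef_rank_one_sum:
  assumes "\<And>u. u \<in> S \<Longrightarrow> a u \<in> carrier_vec m" "\<And>u. u \<in> S \<Longrightarrow> 0 \<le> c u"
  shows "pos_semidef m (rank_one_sum m S c a)"
  unfolding rank_one_sum_def using assms
  by (intro pos_semidef_msum pos_semidef_outer_prod) (auto simp: less_eq_complex_def)

lemma dim_row_rank_one_sum [simp]: "dim_row (rank_one_sum m S c a) = m"
  and dim_col_rank_one_sum [simp]: "dim_col (rank_one_sum m S c a) = m"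
  unfolding rank_one_sum_def msum_def by simp_all

lemma index_rank_one_sum:
  assumes a: "\<And>u. u \<in> S \<Longrightarrow> a u \<in> carrier_vec m" and ij: "i < m" "j < m"
  shows "rank_one_sum m S c a $$ (i, j) = (\<Sum>u\<in>S. complex_of_real (c u) * (a u $ i * cnj (a u $ j)))"
  unfolding rank_one_sum_def msum_def using ij
proof (simp, intro sum.cong refl)
  fix u assume "u \<in> S"
  then have "dim_vec (a u) = m" using a carrier_vecD by blast
  then show "(complex_of_real (c u) \<cdot>\<^sub>m outer_prod (a u) (a u)) $$ (i, j)
      = complex_of_real (c u) * (a u $ i * cnj (a u $ j))"
    using ij by simp
qed

lemma rank_one_sum_add:
  assumes "\<And>u. u \<in> S \<Longrightarrow> a u \<in> carrier_vec m"
  shows "rank_one_sum m S c a + rank_one_sum m S c' a = rank_one_sum m S (\<lambda>u. c u + c' u) a"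
  by (intro eq_matI)
    (simp_all add: index_rank_one_sum[OF assms] distrib_right sum.distrib)

lemma logdet_mono: "1 \<le> det X \<Longrightarrow> det X \<le> det Y \<Longrightarrow> logdet X \<le> logdet Y"
  unfolding logdet_def less_eq_complex_def by simp

lemma logdet_rank_one_sum_mono:
  assumes a: "\<And>u. u \<in> S \<Longrightarrow> a u \<in> carrier_vec m"
    and c: "\<And>u. u \<in> S \<Longrightarrow> 0 \<le> c u \<and> c u \<le> c' u"
  shows "logdet (rank_one_sum m S c a + 1\<^sub>m m) \<le> logdet (rank_one_sum m S c' a + 1\<^sub>m m)"
proof -
  let ?S = "rank_one_sum m S c a" and ?D = "rank_one_sum m S (\<lambda>u. c' u - c u) a"
  have S: "pos_semidef m ?S" and D: "pos_semidef m ?D"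
    using c by (auto intro!: pos_semidef_rank_one_sum a)
  then have S_carrier: "?S \<in> carrier_mat m m" and D_carrier: "?D \<in> carrier_mat m m"
    unfolding pos_semidef_def by auto
  have split_S: "?S + 1\<^sub>m m = 1\<^sub>m m + ?S"
    using S_carrier by (rule comm_add_mat) simp
  have split_S_D: "rank_one_sum m S c' a + 1\<^sub>m m = 1\<^sub>m m + ?S + ?D"
  proof -
    have sum_eq: "rank_one_sum m S c' a = ?S + ?D"
      using rank_one_sum_add[of S a m c "\<lambda>u. c' u - c u"] a by simp
    have "?S + ?D + 1\<^sub>m m = 1\<^sub>m m + (?S + ?D)"
      using S_carrier D_carrier by (intro comm_add_mat) auto
    also have "\<dots> = 1\<^sub>m m + ?S + ?D"
      using S_carrier D_carrier by (intro assoc_add_mat[symmetric]) auto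
    finally show ?thesis unfolding sum_eq .
  qed
  show ?thesis
    unfolding split_S split_S_D
    by (rule logdet_mono[OF one_le_det_one_plus_pos_semidef[OF S] det_one_plus_mono[OF S D]])
qed

lemma Sup_eq_logdet_rank_one_sum:
  assumes a: "\<And>u. u \<in> S \<Longrightarrow> a u \<in> carrier_vec m"
    and bound: "\<And>z. z \<in> Z \<Longrightarrow>
      \<exists>c. (\<forall>u \<in> S. 0 \<le> c u \<and> c u \<le> cmax u) \<and> z = logdet (rank_one_sum m S c a + 1\<^sub>m m)"
    and attained: "logdet (rank_one_sum m S cmax a + 1\<^sub>m m) \<in> Z"
  shows "Sup Z = logdet (rank_one_sum m S cmax a + 1\<^sub>m m)"
proof (rule cSup_eq_maximum[OF attained])
  fix z assume "z \<in> Z"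
  with bound obtain c where c_bounds: "\<forall>u \<in> S. 0 \<le> c u \<and> c u \<le> cmax u"
    and z: "z = logdet (rank_one_sum m S c a + 1\<^sub>m m)" by blast
  show "z \<le> logdet (rank_one_sum m S cmax a + 1\<^sub>m m)"
    unfolding z by (rule logdet_rank_one_sum_mono) (use a c_bounds in auto)
qed

lemma rank_one_sandwich:
  assumes a: "a \<in> carrier_vec m" and t: "t \<in> carrier_vec n" and Q: "Q \<in> carrier_mat n n"
  shows "(x \<cdot>\<^sub>m outer_prod a t) * Q * mat_adjoint (x \<cdot>\<^sub>m outer_prod a t)
    = (x * cnj x * qform Q t) \<cdot>\<^sub>m outer_prod a a"
proof -
  let ?X = "x \<cdot>\<^sub>m outer_prod a t"
  have dims: "dim_vec a = m" "dim_vec t = n" "dim_row Q = n" "dim_col Q = n" using a t Q by auto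
  show ?thesis
  proof (rule eq_matI)
    fix i j assume "i < dim_row ((x * cnj x * qform Q t) \<cdot>\<^sub>m outer_prod a a)"
      and "j < dim_col ((x * cnj x * qform Q t) \<cdot>\<^sub>m outer_prod a a)"
    then have ij: "i < m" "j < m" by (simp_all add: dims outer_prod_def)
    have "(?X * Q * mat_adjoint ?X) $$ (i, j) = (\<Sum>l<n. (\<Sum>k<n. ?X $$ (i, k) * Q $$ (k, l)) * cnj (?X $$ (j, l)))"
      using ij by (simp add: dims outer_prod_def scalar_prod_def atLeast0LessThan)
    also have "\<dots> = (\<Sum>l<n. \<Sum>k<n. (x * cnj x * (a $ i * cnj (a $ j))) * (cnj (t $ k) * Q $$ (k, l) * t $ l))"
      using ij by (simp add: dims sum_distrib_left sum_distrib_right mult_ac)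
    also have "\<dots> = (x * cnj x * (a $ i * cnj (a $ j))) * qform Q t"
      unfolding qform_eq_sum[OF Q t] sum_distrib_left by (rule sum.swap)
    also have "\<dots> = ((x * cnj x * qform Q t) \<cdot>\<^sub>m outer_prod a a) $$ (i, j)"
      using ij by (simp add: dims)
    finally show "(?X * Q * mat_adjoint ?X) $$ (i, j) = ((x * cnj x * qform Q t) \<cdot>\<^sub>m outer_prod a a) $$ (i, j)" .
  qed (simp_all add: dims outer_prod_def)
qed

lemma psd_qform_bounds:
  assumes "psd n Q" "t \<in> carrier_vec n" "conjugate t \<bullet> t = 1"
  shows "0 \<le> Re (qform Q t) \<and> Re (qform Q t) \<le> Re (mtrace Q)"
  using pos_semidef_if_psd[OF assms(1)] qform_le_mtrace[OF _ assms(2,3)]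
  unfolding pos_semidef_def less_eq_complex_def using assms(2) by auto

lemma rank_one_sandwich_psd:
  assumes "psd n Q" "a \<in> carrier_vec m" "t \<in> carrier_vec n"
  shows "(x \<cdot>\<^sub>m outer_prod a t) * Q * mat_adjoint (x \<cdot>\<^sub>m outer_prod a t)
    = complex_of_real ((cmod x)\<^sup>2 * Re (qform Q t)) \<cdot>\<^sub>m outer_prod a a"
proof -
  have "0 \<le> qform Q t"
    using pos_semidef_if_psd[OF assms(1)] assms(3) unfolding pos_semidef_def by simp
  then have "qform Q t = complex_of_real (Re (qform Q t))"
    by (simp add: less_eq_complex_def complex_eq_iff)
  moreover have "x * cnj x = complex_of_real ((cmod x)\<^sup>2)"
    by (rule complex_norm_square[symmetric])
  ultimately show ?thesis
    using rank_one_sandwich[OF assms(2,3)] assms(1) unfolding psd_def by (metis of_real_mult)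
qed

lemma beamforming_covariance:
  assumes t: "t \<in> carrier_vec n" "conjugate t \<bullet> t = 1" and P: "0 \<le> P"
  defines "Q \<equiv> complex_of_real P \<cdot>\<^sub>m outer_prod t t"
  shows "psd n Q" and "mtrace Q = P" and "qform Q t = P"
proof -
  have dim: "dim_vec t = n" using t by simp
  have "pos_semidef n Q"
    unfolding Q_def using t P by (intro pos_semidef_outer_prod) (auto simp: less_eq_complex_def)
  moreover have "mat_adjoint Q = Q"
    unfolding Q_def by (intro eq_matI) (auto simp: dim outer_prod_def)
  ultimately show "psd n Q"
    unfolding psd_def pos_semidef_def by (simp add: less_eq_complex_def)
  have "mtrace Q = P * (\<Sum>i<n. cnj (t $ i) * t $ i)"
    unfolding Q_def mtrace_def by (simp add: dim outer_prod_def sum_distrib_left mult_ac)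
  also have "(\<Sum>i<n. cnj (t $ i) * t $ i) = conjugate t \<bullet> t"
    using t by (simp add: scalar_prod_def atLeast0LessThan)
  finally show "mtrace Q = P" using t by simp
  show "qform Q t = P"
    unfolding Q_def qform_outer_prod[OF t(1) t(1)] using t by simp
qed

lemma aR_carrier: "aR lam d M beta \<in> carrier_vec M"
  unfolding aR_def by simp

lemma aT_carrier: "aT lam N w theta \<in> carrier_vec N"
  unfolding aT_def by simp

lemma dim_vec_aR [simp]: "dim_vec (aR lam d M beta) = M"
  by (simp add: aR_def)

lemma dim_vec_aT [simp]: "dim_vec (aT lam N w theta) = N"
  by (simp add: aT_def)

lemma aT_unit:
  assumes "1 \<le> N"
  shows "conjugate (aT lam N w theta) \<bullet> aT lam N w theta = 1"
proof -
  have "cnj (aT lam N w theta $ j) * aT lam N w theta $ j = complex_of_real (1 / real N)"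
    if "j < N" for j
  proof -
    have "cmod (aT lam N w theta $ j) = 1 / sqrt (real N)"
      using that by (simp add: aT_def norm_mult norm_divide)
    then show ?thesis
      using complex_norm_square[of "aT lam N w theta $ j"] by (simp add: mult.commute power_divide)
  qed
  then have "conjugate (aT lam N w theta) \<bullet> aT lam N w theta = (\<Sum>j<N. complex_of_real (1 / real N))"
    unfolding scalar_prod_def by (simp add: atLeast0LessThan)
  also have "\<dots> = 1" using assms by simp
  finally show ?thesis .
qed

lemma chanG_single_path:
  "chanG lam d M N 1 g b th w
    = (complex_of_real (sqrt (real (M * N))) * g 1) \<cdot>\<^sub>m outer_prod (aR lam d M (b 1)) (aT lam N w (th 1))"
  by (rule eq_matI)
    (auto simp: chanG_def AR_def Gam_def AT_def outer_prod_def scalar_prod_def)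

lemma psd_dim_one:
  assumes "psd 1 Q"
  shows "Q $$ (0, 0) = complex_of_real (Re (Q $$ (0, 0)))" and "0 \<le> Re (Q $$ (0, 0))"
    and "mtrace Q = Q $$ (0, 0)"
proof -
  have Q: "Q \<in> carrier_mat 1 1" using assms unfolding psd_def by simp
  have "qform Q (unit_vec 1 0) = Q $$ (0, 0)"
    using Q by (simp add: qform_eq_sum[OF Q])
  moreover have "0 \<le> qform Q (unit_vec 1 0)"
    using pos_semidef_if_psd[OF assms] unfolding pos_semidef_def by simp
  ultimately show "Q $$ (0, 0) = complex_of_real (Re (Q $$ (0, 0)))" and "0 \<le> Re (Q $$ (0, 0))"
    by (auto simp: less_eq_complex_def complex_eq_iff)
  show "mtrace Q = Q $$ (0, 0)" using Q unfolding mtrace_def by simp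
qed

lemma AR_Gam_sandwich_single_path:
  assumes "psd 1 Qt"
  shows "complex_of_real K \<cdot>\<^sub>m
      (AR lam d M 1 b * Gam 1 g * Qt * mat_adjoint (Gam 1 g) * mat_adjoint (AR lam d M 1 b))
    = complex_of_real (K * (cmod (g 1))\<^sup>2 * Re (Qt $$ (0, 0)))
        \<cdot>\<^sub>m outer_prod (aR lam d M (b 1)) (aR lam d M (b 1))"
proof -
  have dims: "dim_row Qt = 1" "dim_col Qt = 1" using assms unfolding psd_def by auto
  obtain r where r: "Qt $$ (0, 0) = complex_of_real r"
    using psd_dim_one(1)[OF assms] by blast
  have "g 1 * cnj (g 1) = complex_of_real ((cmod (g 1))\<^sup>2)"
    by (rule complex_norm_square[symmetric])
  then show ?thesis
    by (intro eq_matI) (auto simp: AR_def Gam_def outer_prod_def scalar_prod_def dims r mult_ac)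
qed

lemma Sup_sum_rate_rank_one_channels:
  fixes G :: "nat \<Rightarrow> 'p \<Rightarrow> complex mat" and t :: "nat \<Rightarrow> 'p \<Rightarrow> complex vec"
    and admissible :: "nat \<Rightarrow> 'p \<Rightarrow> bool"
  assumes a: "\<And>u. u \<in> S \<Longrightarrow> a u \<in> carrier_vec m"
    and t: "\<And>u p. u \<in> S \<Longrightarrow> t u p \<in> carrier_vec (N u)"
    and t_unit: "\<And>u p. u \<in> S \<Longrightarrow> conjugate (t u p) \<bullet> t u p = 1"
    and G: "\<And>u p. u \<in> S \<Longrightarrow> G u p = x u \<cdot>\<^sub>m outer_prod (a u) (t u p)"
    and P: "\<And>u. u \<in> S \<Longrightarrow> 0 \<le> P u"
    and cmax: "\<And>u. u \<in> S \<Longrightarrow> cmax u = (cmod (x u))\<^sup>2 * P u"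
    and admissible: "\<And>u. u \<in> S \<Longrightarrow> \<exists>p. admissible u p"
  shows "Sup {logdet (msum m S (\<lambda>u. G u (w u) * Q u * mat_adjoint (G u (w u))) + 1\<^sub>m m) |
      Q w. \<forall>u\<in>S. psd (N u) (Q u) \<and> Re (mtrace (Q u)) \<le> P u \<and> admissible u (w u)}
    = logdet (rank_one_sum m S cmax a + 1\<^sub>m m)" (is "Sup ?Z = _")
proof (rule Sup_eq_logdet_rank_one_sum)
  have sandwich: "G u p * Q * mat_adjoint (G u p)
      = complex_of_real ((cmod (x u))\<^sup>2 * Re (qform Q (t u p))) \<cdot>\<^sub>m outer_prod (a u) (a u)"
    if "u \<in> S" "psd (N u) Q" for u p Q
    unfolding G[OF that(1)] by (rule rank_one_sandwich_psd[OF that(2) a[OF that(1)] t[OF that(1)]])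
  show "a u \<in> carrier_vec m" if "u \<in> S" for u using a[OF that] .
  show "\<exists>c. (\<forall>u\<in>S. 0 \<le> c u \<and> c u \<le> cmax u) \<and> z = logdet (rank_one_sum m S c a + 1\<^sub>m m)"
    if "z \<in> ?Z" for z
  proof -
    from that obtain Q w
      where z: "z = logdet (msum m S (\<lambda>u. G u (w u) * Q u * mat_adjoint (G u (w u))) + 1\<^sub>m m)"
        and Q: "\<forall>u\<in>S. psd (N u) (Q u) \<and> Re (mtrace (Q u)) \<le> P u" by blast
    define c where "c u = (cmod (x u))\<^sup>2 * Re (qform (Q u) (t u (w u)))" for u
    have "msum m S (\<lambda>u. G u (w u) * Q u * mat_adjoint (G u (w u))) = rank_one_sum m S c a"
      unfolding rank_one_sum_def c_def using Q by (intro msum_cong) (simp add: sandwich)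
    moreover have "0 \<le> c u \<and> c u \<le> cmax u" if "u \<in> S" for u
    proof -
      have "0 \<le> Re (qform (Q u) (t u (w u)))" "Re (qform (Q u) (t u (w u))) \<le> P u"
        using psd_qform_bounds[of "N u" "Q u" "t u (w u)"] Q t t_unit that by force+
      then show ?thesis
        unfolding c_def cmax[OF that] by (simp add: mult_left_mono)
    qed
    ultimately show ?thesis using z by auto
  qed
  define w0 where "w0 u = (SOME p. admissible u p)" for u
  have w0: "admissible u (w0 u)" if "u \<in> S" for u
    unfolding w0_def by (rule someI_ex[OF admissible[OF that]])
  define Q0 where "Q0 u = complex_of_real (P u) \<cdot>\<^sub>m outer_prod (t u (w0 u)) (t u (w0 u))" for u
  have Q0: "psd (N u) (Q0 u)" "mtrace (Q0 u) = P u" "qform (Q0 u) (t u (w0 u)) = P u"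
    if "u \<in> S" for u
    unfolding Q0_def by (rule beamforming_covariance[OF t[OF that] t_unit[OF that] P[OF that]])+
  have msum_eq: "msum m S (\<lambda>u. G u (w0 u) * Q0 u * mat_adjoint (G u (w0 u))) = rank_one_sum m S cmax a"
    unfolding rank_one_sum_def by (intro msum_cong) (simp add: sandwich Q0 cmax)
  have feasible: "\<forall>u\<in>S. psd (N u) (Q0 u) \<and> Re (mtrace (Q0 u)) \<le> P u \<and> admissible u (w0 u)"
    using Q0 w0 by simp
  show "logdet (rank_one_sum m S cmax a + 1\<^sub>m m) \<in> ?Z"
    using msum_eq feasible by (intro CollectI exI[of _ Q0] exI[of _ w0] conjI) simp_all
qed

lemma Sup_sum_rate_upper_bound_single_path:
  assumes L: "\<And>u. u \<in> S \<Longrightarrow> L u = 1" and P: "\<And>u. u \<in> S \<Longrightarrow> 0 \<le> P u"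
  shows "Sup {logdet (msum M S (\<lambda>u. complex_of_real (real (M * N u)) \<cdot>\<^sub>m
        (AR lam d M (L u) (beta u) * Gam (L u) (gamma u) * Qt u *
         mat_adjoint (Gam (L u) (gamma u)) * mat_adjoint (AR lam d M (L u) (beta u)))) + 1\<^sub>m M) |
      Qt. \<forall>u\<in>S. psd (L u) (Qt u) \<and> Re (mtrace (Qt u)) \<le> real (L u) * P u}
    = logdet (rank_one_sum M S (\<lambda>u. real (M * N u) * P u * (cmod (gamma u 1))\<^sup>2)
        (\<lambda>u. aR lam d M (beta u 1)) + 1\<^sub>m M)"
    (is "Sup ?Z = logdet (rank_one_sum M S ?cmax ?a + 1\<^sub>m M)")
proof (rule Sup_eq_logdet_rank_one_sum)
  define F where "F Qt u = complex_of_real (real (M * N u)) \<cdot>\<^sub>m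
    (AR lam d M (L u) (beta u) * Gam (L u) (gamma u) * Qt *
     mat_adjoint (Gam (L u) (gamma u)) * mat_adjoint (AR lam d M (L u) (beta u)))" for Qt u
  have F: "F Qt u = complex_of_real (real (M * N u) * (cmod (gamma u 1))\<^sup>2 * Re (Qt $$ (0, 0)))
      \<cdot>\<^sub>m outer_prod (?a u) (?a u)"
    if "u \<in> S" "psd 1 Qt" for u Qt
    unfolding F_def L[OF that(1)] by (rule AR_Gam_sandwich_single_path[OF that(2)])
  show "?a u \<in> carrier_vec M" for u by (rule aR_carrier)
  show "\<exists>c. (\<forall>u\<in>S. 0 \<le> c u \<and> c u \<le> ?cmax u) \<and> z = logdet (rank_one_sum M S c ?a + 1\<^sub>m M)"
    if "z \<in> ?Z" for z
  proof -
    from that obtain Qt where z: "z = logdet (msum M S (\<lambda>u. F (Qt u) u) + 1\<^sub>m M)"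
      and Qt: "\<forall>u\<in>S. psd (L u) (Qt u) \<and> Re (mtrace (Qt u)) \<le> real (L u) * P u"
      unfolding F_def by blast
    define c where "c u = real (M * N u) * (cmod (gamma u 1))\<^sup>2 * Re (Qt u $$ (0, 0))" for u
    have "msum M S (\<lambda>u. F (Qt u) u) = rank_one_sum M S c ?a"
      unfolding rank_one_sum_def c_def using Qt L by (intro msum_cong F) auto
    moreover have "0 \<le> c u \<and> c u \<le> ?cmax u" if "u \<in> S" for u
    proof -
      have "0 \<le> Re (Qt u $$ (0, 0))" "Re (Qt u $$ (0, 0)) \<le> P u"
        using psd_dim_one(2,3)[of "Qt u"] Qt L that by auto
      then show ?thesis
        unfolding c_def
        using mult_left_mono[of "Re (Qt u $$ (0, 0))" "P u" "real (M * N u) * (cmod (gamma u 1))\<^sup>2"]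
        by (simp add: mult_ac)
    qed
    ultimately show ?thesis using z by auto
  qed
  define Qt0 where "Qt0 u = complex_of_real (P u) \<cdot>\<^sub>m outer_prod (unit_vec 1 0) (unit_vec 1 0)" for u
  have Qt0: "psd 1 (Qt0 u)" "mtrace (Qt0 u) = P u" "Qt0 u $$ (0, 0) = P u" if "u \<in> S" for u
    using beamforming_covariance[of "unit_vec 1 0" 1 "P u"] P[OF that] unfolding Qt0_def by simp_all
  have "msum M S (\<lambda>u. F (Qt0 u) u) = rank_one_sum M S ?cmax ?a"
    unfolding rank_one_sum_def using Qt0 by (intro msum_cong) (simp add: F mult_ac)
  moreover have "\<forall>u\<in>S. psd (L u) (Qt0 u) \<and> Re (mtrace (Qt0 u)) \<le> real (L u) * P u"
    using Qt0 L by simp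
  ultimately show "logdet (rank_one_sum M S ?cmax ?a + 1\<^sub>m M) \<in> ?Z"
    unfolding F_def by (intro CollectI exI[of _ Qt0] conjI) simp_all
qed

lemma equispaced_positions:
  fixes W :: real
  assumes "0 < W" "1 \<le> N"
  shows "(\<forall>n\<in>{1..N}. 0 \<le> W * real n / real N \<and> W * real n / real N \<le> W)
    \<and> (\<forall>n\<in>{1..N}. \<forall>n'\<in>{1..N}. n \<noteq> n' \<longrightarrow> W * real n / real N \<noteq> W * real n' / real N)"
  using assms by (auto simp: divide_le_eq)

lemma Sup_sum_rate_single_path:
  assumes N: "\<And>u. u \<in> S \<Longrightarrow> 1 \<le> N u" and W: "\<And>u. u \<in> S \<Longrightarrow> 0 < W u"
    and P: "\<And>u. u \<in> S \<Longrightarrow> 0 \<le> P u" and L: "\<And>u. u \<in> S \<Longrightarrow> L u = 1"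
  shows "Sup {logdet (msum M S
        (\<lambda>u. chanG lam d M (N u) (L u) (gamma u) (beta u) (theta u) (w u) * Q u *
          mat_adjoint (chanG lam d M (N u) (L u) (gamma u) (beta u) (theta u) (w u))) + 1\<^sub>m M) |
      Q w. \<forall>u\<in>S. psd (N u) (Q u) \<and> Re (mtrace (Q u)) \<le> P u
        \<and> (\<forall>n\<in>{1..N u}. 0 \<le> w u n \<and> w u n \<le> W u)
        \<and> (\<forall>n\<in>{1..N u}. \<forall>n'\<in>{1..N u}. n \<noteq> n' \<longrightarrow> w u n \<noteq> w u n')}
    = logdet (rank_one_sum M S (\<lambda>u. real (M * N u) * P u * (cmod (gamma u 1))\<^sup>2)
        (\<lambda>u. aR lam d M (beta u 1)) + 1\<^sub>m M)"
proof (rule Sup_sum_rate_rank_one_channels[where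
      G = "\<lambda>u. chanG lam d M (N u) (L u) (gamma u) (beta u) (theta u)"
      and t = "\<lambda>u p. aT lam (N u) p (theta u 1)"
      and x = "\<lambda>u. complex_of_real (sqrt (real (M * N u))) * gamma u 1"])
  fix u p assume u: "u \<in> S"
  show "aR lam d M (beta u 1) \<in> carrier_vec M" by (rule aR_carrier)
  show "aT lam (N u) p (theta u 1) \<in> carrier_vec (N u)" by (rule aT_carrier)
  show "conjugate (aT lam (N u) p (theta u 1)) \<bullet> aT lam (N u) p (theta u 1) = 1"
    by (rule aT_unit[OF N[OF u]])
  show "chanG lam d M (N u) (L u) (gamma u) (beta u) (theta u) p
      = (complex_of_real (sqrt (real (M * N u))) * gamma u 1)
        \<cdot>\<^sub>m outer_prod (aR lam d M (beta u 1)) (aT lam (N u) p (theta u 1))"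
    unfolding L[OF u] by (rule chanG_single_path)
  show "0 \<le> P u" by (rule P[OF u])
  have "(cmod (complex_of_real (sqrt (real (M * N u))) * gamma u 1))\<^sup>2
      = real (M * N u) * (cmod (gamma u 1))\<^sup>2"
    by (simp add: norm_mult power_mult_distrib)
  then show "real (M * N u) * P u * (cmod (gamma u 1))\<^sup>2
      = (cmod (complex_of_real (sqrt (real (M * N u))) * gamma u 1))\<^sup>2 * P u"
    by simp
  show "\<exists>p. (\<forall>n\<in>{1..N u}. 0 \<le> p n \<and> p n \<le> W u) \<and>
      (\<forall>n\<in>{1..N u}. \<forall>n'\<in>{1..N u}. n \<noteq> n' \<longrightarrow> p n \<noteq> p n')"
    using W[OF u] N[OF u]
    by (intro exI[of _ "\<lambda>n. W u * real n / real (N u)"] equispaced_positions)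
qed

theorem lemma2:
  fixes lam :: real and U M :: nat
    and N L :: "nat \<Rightarrow> nat" and W P :: "nat \<Rightarrow> real"
    and gamma :: "nat \<Rightarrow> nat \<Rightarrow> complex"
    and beta theta :: "nat \<Rightarrow> nat \<Rightarrow> real"
  assumes lam_pos: "lam > 0"
    and M_pos: "M \<ge> 1"
    and N_pos: "\<forall>u\<in>{1..U}. N u \<ge> 1"
    and W_pos: "\<forall>u\<in>{1..U}. W u > 0"
    and P_pos: "\<forall>u\<in>{1..U}. P u > 0"
    and L_one: "\<forall>u\<in>{1..U}. L u = 1"
    and beta_rng: "\<forall>u\<in>{1..U}. \<forall>l\<in>{1..L u}. 0 \<le> beta u l \<and> beta u l \<le> pi"
    and theta_rng: "\<forall>u\<in>{1..U}. \<forall>l\<in>{1..L u}. 0 \<le> theta u l \<and> theta u l \<le> pi"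
  defines "d \<equiv> lam / 2"
  defines "Cstar \<equiv> Sup {logdet (msum M {1..U}
              (\<lambda>u. chanG lam d M (N u) (L u) (gamma u) (beta u) (theta u) (w u) * Q u *
                   mat_adjoint (chanG lam d M (N u) (L u) (gamma u) (beta u) (theta u) (w u)))
              + 1\<^sub>m M) |
          (Q :: nat \<Rightarrow> complex mat) (w :: nat \<Rightarrow> nat \<Rightarrow> real).
          \<forall>u\<in>{1..U}. psd (N u) (Q u) \<and> Re (mtrace (Q u)) \<le> P u
            \<and> (\<forall>n\<in>{1..N u}. 0 \<le> w u n \<and> w u n \<le> W u)
            \<and> (\<forall>n\<in>{1..N u}. \<forall>n'\<in>{1..N u}. n \<noteq> n' \<longrightarrow> w u n \<noteq> w u n')}"
  defines "Cub \<equiv> Sup {logdet (msum M {1..U}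
              (\<lambda>u. complex_of_real (real (M * N u)) \<cdot>\<^sub>m
                   (AR lam d M (L u) (beta u) * Gam (L u) (gamma u) * Qt u *
                    mat_adjoint (Gam (L u) (gamma u)) * mat_adjoint (AR lam d M (L u) (beta u))))
              + 1\<^sub>m M) |
          (Qt :: nat \<Rightarrow> complex mat).
          \<forall>u\<in>{1..U}. psd (L u) (Qt u) \<and> Re (mtrace (Qt u)) \<le> real (L u) * P u}"
  shows "Cstar = Cub \<and>
         Cub = logdet (msum M {1..U}
              (\<lambda>u. complex_of_real (real (M * N u) * P u * (cmod (gamma u 1))\<^sup>2) \<cdot>\<^sub>m
                   (Matrix.mat M M (\<lambda>(i, j). aR lam d M (beta u 1) $ i *
                                     cnj (aR lam d M (beta u 1) $ j))))
              + 1\<^sub>m M)"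
proof -
  let ?c = "\<lambda>u. real (M * N u) * P u * (cmod (gamma u 1))\<^sup>2" and ?a = "\<lambda>u. aR lam d M (beta u 1)"
  have P_nonneg: "0 \<le> P u" if "u \<in> {1..U}" for u using P_pos that less_imp_le by blast
  have "Cstar = logdet (rank_one_sum M {1..U} ?c ?a + 1\<^sub>m M)"
    unfolding Cstar_def
    by (rule Sup_sum_rate_single_path) (use N_pos W_pos P_nonneg L_one in blast)+
  moreover have "Cub = logdet (rank_one_sum M {1..U} ?c ?a + 1\<^sub>m M)"
    unfolding Cub_def
    by (rule Sup_sum_rate_upper_bound_single_path) (use L_one P_nonneg in blast)+
  moreover have "rank_one_sum M {1..U} ?c ?a = msum M {1..U}
      (\<lambda>u. complex_of_real (?c u) \<cdot>\<^sub>m Matrix.mat M M (\<lambda>(i, j). ?a u $ i * cnj (?a u $ j)))"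
    by (simp add: rank_one_sum_def outer_prod_def)
  ultimately show ?thesis by simp
qed

end
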